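(* Let $\Gamma$ be a finite group, $G=(V,E)$ a finite simple graph, $\phi:\Gamma\to\operatorname{Aut}(G)$ a homomorphism and $\tau:\Gamma\to O(\mathbb{R}^3)$ an injective homomorphism whose image $\tau(\Gamma)$ is one of the groups $C_i,C_s,C_2,C_{2v},C_{2h}$ below. If $(G,p)$ is a $\Gamma$-symmetric framework on $\mathcal{Y}$ (with respect to $\phi,\tau$) which is isostatic, then $G$ is $(2,2)$-tight and: - if $\tau(\Gamma)=C_i$: the element mapped to the inversion fixes no edge; - if $\tau(\Gamma)=C_s$: the element mapped to the reflection fixes no edge; - if $\tau(\Gamma)=C_2$: the element mapped to $c_2'$ fixes either exactly two edges and no vertex, or no edge and exactly one vertex; - if $\tau(\Gamma)=C_{2v}$: the elements mapped to $\sigma$ and $\sigma'$ fix no edge, and the element mapped to $c_2'$ fixes either exactly two edges and no vertex, or no edge and exactly one vertex; - if $\tau(\Gamma)=C_{2h}$: the elements mapped to $\sigma$ and to the inversion fix no edge, and the element mapped to $c_2'$ fixes exactly two edges and no vertex.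
   Context: $\mathcal{Y}=\{(x,y,z)\in\mathbb{R}^3:x^2+y^2=1\}$. A framework on $\mathcal{Y}$ is a pair $(G,p)$, $G=(V,E)$ finite simple, $p:V\to\mathcal{Y}$ with $p(u)\ne p(v)$ for $uv\in E$. Its rigidity matrix $R_{\mathcal{Y}}(G,p)$ is the $(|E|+|V|)\times 3|V|$ matrix with, for each edge $v_iv_j$, a row with $p(v_i)-p(v_j)$ in the columns of $v_i$, $p(v_j)-p(v_i)$ in the columns of $v_j$, zeros elsewhere, and for each vertex $v_i$ with $p(v_i)=(x_i,y_i,z_i)$ a row with $(x_i,y_i,0)$ in the columns of $v_i$, zeros elsewhere. Trivial infinitesimal motions are $u_i=(0,0,a)+b(-y_i,x_i,0)$. $(G,p)$ is infinitesimally rigid if every kernel vector of $R_{\mathcal{Y}}(G,p)$ is trivial, independent if its rows are linearly independent, isostatic if both. $(G,p)$ is $\Gamma$-symmetric w.r.t. $\phi,\tau$ if $\tau(\gamma)p(v)=p(\phi(\gamma)v)$ for all $v,\gamma$. A vertex $v$ is fixed by $\gamma$ if $\phi(\gamma)v=v$; an edge $uv$ is fixed if $\phi(\gamma)$ fixes both endpoints or swaps them. A graph is $(2,2)$-sparse if every subgraph $(V',E')$ with $V'\neq\emptyset$ has $|E'|\le 2|V'|-2$, and $(2,2)$-tight if moreover $|E|=2|V|-2$. Symmetry operations: $\sigma$ = reflection in a plane containing the $z$-axis; $\sigma'$ = reflection in the $xy$-plane; $c_2'$ = half-turn about a line through the origin perpendicular to the $z$-axis; $\varphi=-I$ the inversion.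 Groups: $C_i=\{\mathrm{id},\varphi\}$; $C_s=\{\mathrm{id},\sigma\}$ or $\{\mathrm{id},\sigma'\}$; $C_2=\{\mathrm{id},c_2'\}$; $C_{2v}=\{\mathrm{id},\sigma,\sigma',c_2'\}$; $C_{2h}=\{\mathrm{id},\sigma,c_2',\varphi\}$ (with the axis of $c_2'$ perpendicular to the plane of $\sigma$). *)

theory Defs
  imports "HOL-Analysis.Analysis" "HOL-Algebra.Group"
begin

definition simple_graph :: "'v set \<Rightarrow> 'v set set \<Rightarrow> bool" where
  "simple_graph V E \<longleftrightarrow> finite V \<and>
     (\<forall>e\<in>E. \<exists>u v. e = {u, v} \<and> u \<noteq> v \<and> u \<in> V \<and> v \<in> V)"

definition on_cylinder :: "real^3 \<Rightarrow> bool" where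
  "on_cylinder q \<longleftrightarrow> (q$1)^2 + (q$2)^2 = 1"

definition cyl_framework :: "'v set \<Rightarrow> 'v set set \<Rightarrow> ('v \<Rightarrow> real^3) \<Rightarrow> bool" where
  "cyl_framework V E p \<longleftrightarrow> simple_graph V E \<and> (\<forall>v\<in>V. on_cylinder (p v)) \<and>
     (\<forall>u v. {u, v} \<in> E \<longrightarrow> u \<noteq> v \<longrightarrow> p u \<noteq> p v)"

text \<open>Rows of the rigidity matrix, as functions assigning to each vertex its 3 columns.
  Edge row of e = {vi,vj}: p(vi)-p(vj) in the columns of vi, p(vj)-p(vi) in those of vj.\<close>
definition edge_row :: "('v \<Rightarrow> real^3) \<Rightarrow> 'v set \<Rightarrow> 'v \<Rightarrow> real^3" where
  "edge_row p e = (\<lambda>w. if w \<in> e then (\<Sum>u\<in>e - {w}. p w - p u) else 0)"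

definition vertex_row :: "('v \<Rightarrow> real^3) \<Rightarrow> 'v \<Rightarrow> 'v \<Rightarrow> real^3" where
  "vertex_row p v = (\<lambda>w. if w = v then vector [p v $ 1, p v $ 2, 0] else 0)"

definition in_kernel :: "'v set \<Rightarrow> 'v set set \<Rightarrow> ('v \<Rightarrow> real^3) \<Rightarrow> ('v \<Rightarrow> real^3) \<Rightarrow> bool" where
  "in_kernel V E p u \<longleftrightarrow>
     (\<forall>e\<in>E. (\<Sum>w\<in>V. edge_row p e w \<bullet> u w) = 0) \<and>
     (\<forall>v\<in>V. (\<Sum>w\<in>V. vertex_row p v w \<bullet> u w) = 0)"

definition trivial_motion :: "'v set \<Rightarrow> ('v \<Rightarrow> real^3) \<Rightarrow> ('v \<Rightarrow> real^3) \<Rightarrow> bool" where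
  "trivial_motion V p u \<longleftrightarrow> (\<exists>a b. \<forall>w\<in>V.
      u w = vector [0, 0, a] + b *\<^sub>R vector [- (p w $ 2), p w $ 1, 0])"

definition inf_rigid :: "'v set \<Rightarrow> 'v set set \<Rightarrow> ('v \<Rightarrow> real^3) \<Rightarrow> bool" where
  "inf_rigid V E p \<longleftrightarrow> (\<forall>u. in_kernel V E p u \<longrightarrow> trivial_motion V p u)"

definition independent_fw :: "'v set \<Rightarrow> 'v set set \<Rightarrow> ('v \<Rightarrow> real^3) \<Rightarrow> bool" where
  "independent_fw V E p \<longleftrightarrow> (\<forall>c d.
     (\<forall>w\<in>V. (\<Sum>e\<in>E. c e *\<^sub>R edge_row p e w) + (\<Sum>v\<in>V. d v *\<^sub>R vertex_row p v w) = 0)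
     \<longrightarrow> (\<forall>e\<in>E. c e = 0) \<and> (\<forall>v\<in>V. d v = 0))"

definition isostatic :: "'v set \<Rightarrow> 'v set set \<Rightarrow> ('v \<Rightarrow> real^3) \<Rightarrow> bool" where
  "isostatic V E p \<longleftrightarrow> inf_rigid V E p \<and> independent_fw V E p"

definition sparse22 :: "'v set \<Rightarrow> 'v set set \<Rightarrow> bool" where
  "sparse22 V E \<longleftrightarrow> (\<forall>V' E'. V' \<noteq> {} \<and> V' \<subseteq> V \<and> E' \<subseteq> E \<and> (\<forall>e\<in>E'. e \<subseteq> V')
      \<longrightarrow> int (card E') \<le> 2 * int (card V') - 2)"

definition tight22 :: "'v set \<Rightarrow> 'v set set \<Rightarrow> bool" where
  "tight22 V E \<longleftrightarrow> sparse22 V E \<and> int (card E) = 2 * int (card V) - 2"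

definition graph_aut :: "'v set \<Rightarrow> 'v set set \<Rightarrow> ('v \<Rightarrow> 'v) \<Rightarrow> bool" where
  "graph_aut V E f \<longleftrightarrow> bij_betw f V V \<and>
     (\<forall>u\<in>V. \<forall>v\<in>V. {u, v} \<in> E \<longleftrightarrow> {f u, f v} \<in> E)"

definition aut_hom :: "('g, 'b) monoid_scheme \<Rightarrow> 'v set \<Rightarrow> 'v set set \<Rightarrow> ('g \<Rightarrow> 'v \<Rightarrow> 'v) \<Rightarrow> bool" where
  "aut_hom \<Gamma> V E \<phi> \<longleftrightarrow> (\<forall>g\<in>carrier \<Gamma>. graph_aut V E (\<phi> g)) \<and>
     (\<forall>g\<in>carrier \<Gamma>. \<forall>h\<in>carrier \<Gamma>. \<forall>v\<in>V. \<phi> (g \<otimes>\<^bsub>\<Gamma>\<^esub> h) v = \<phi> g (\<phi> h v))"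

definition orth_rep :: "('g, 'b) monoid_scheme \<Rightarrow> ('g \<Rightarrow> real^3^3) \<Rightarrow> bool" where
  "orth_rep \<Gamma> \<tau> \<longleftrightarrow> (\<forall>g\<in>carrier \<Gamma>. orthogonal_matrix (\<tau> g)) \<and>
     (\<forall>g\<in>carrier \<Gamma>. \<forall>h\<in>carrier \<Gamma>. \<tau> (g \<otimes>\<^bsub>\<Gamma>\<^esub> h) = \<tau> g ** \<tau> h) \<and>
     inj_on \<tau> (carrier \<Gamma>)"

definition symmetric_fw :: "('g, 'b) monoid_scheme \<Rightarrow> 'v set \<Rightarrow> ('g \<Rightarrow> 'v \<Rightarrow> 'v)
     \<Rightarrow> ('g \<Rightarrow> real^3^3) \<Rightarrow> ('v \<Rightarrow> real^3) \<Rightarrow> bool" where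
  "symmetric_fw \<Gamma> V \<phi> \<tau> p \<longleftrightarrow> (\<forall>g\<in>carrier \<Gamma>. \<forall>v\<in>V. \<tau> g *v p v = p (\<phi> g v))"

definition fixed_vertices :: "'v set \<Rightarrow> ('v \<Rightarrow> 'v) \<Rightarrow> 'v set" where
  "fixed_vertices V f = {v\<in>V. f v = v}"

definition fixed_edges :: "'v set set \<Rightarrow> ('v \<Rightarrow> 'v) \<Rightarrow> 'v set set" where
  "fixed_edges E f = {e\<in>E. \<exists>u v. e = {u, v} \<and>
       ((f u = u \<and> f v = v) \<or> (f u = v \<and> f v = u))}"

definition outer :: "real^3 \<Rightarrow> real^3 \<Rightarrow> real^3^3" where
  "outer a b = (\<chi> i j. a $ i * b $ j)"

definition refl_mat :: "real^3 \<Rightarrow> real^3^3" where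
  "refl_mat n = mat 1 - 2 *\<^sub>R outer n n"

definition halfturn_mat :: "real^3 \<Rightarrow> real^3^3" where
  "halfturn_mat a = 2 *\<^sub>R outer a a - mat 1"

definition e3 :: "real^3" where "e3 = vector [0, 0, 1]"

definition is_sigma :: "real^3^3 \<Rightarrow> bool" where
  "is_sigma M \<longleftrightarrow> (\<exists>n. norm n = 1 \<and> n $ 3 = 0 \<and> M = refl_mat n)"

definition sigma' :: "real^3^3" where "sigma' = refl_mat e3"

definition is_c2' :: "real^3^3 \<Rightarrow> bool" where
  "is_c2' M \<longleftrightarrow> (\<exists>a. norm a = 1 \<and> a $ 3 = 0 \<and> M = halfturn_mat a)"

definition inversion :: "real^3^3" where "inversion = - mat 1"

definition is_Ci :: "(real^3^3) set \<Rightarrow> bool" where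
  "is_Ci S \<longleftrightarrow> S = {mat 1, inversion}"

definition is_Cs :: "(real^3^3) set \<Rightarrow> bool" where
  "is_Cs S \<longleftrightarrow> (\<exists>s. (is_sigma s \<or> s = sigma') \<and> S = {mat 1, s})"

definition is_C2 :: "(real^3^3) set \<Rightarrow> bool" where
  "is_C2 S \<longleftrightarrow> (\<exists>c. is_c2' c \<and> S = {mat 1, c})"

definition is_C2v :: "(real^3^3) set \<Rightarrow> bool" where
  "is_C2v S \<longleftrightarrow> (\<exists>s c. is_sigma s \<and> is_c2' c \<and> S = {mat 1, s, sigma', c})"

text \<open>C_2h: the axis of c2' is perpendicular to the plane of sigma, i.e. parallel to its normal.\<close>
definition is_C2h :: "(real^3^3) set \<Rightarrow> bool" where
  "is_C2h S \<longleftrightarrow> (\<exists>n. norm n = 1 \<and> n $ 3 = 0 \<and>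
      S = {mat 1, refl_mat n, halfturn_mat n, inversion})"

end

theory Submission
  imports Defs
begin

text \<open>Isostasy says that the rows of the rigidity matrix \<open>R_Y(G, p)\<close> are independent and that its
  kernel is spanned by the two trivial motions, the vertical translation and the rotation about
  the axis of the cylinder. Counting rows against columns gives \<open>|E| + |V| = 3|V| - 2\<close>. The rows
  of a subframework \<open>(V', E')\<close> are still independent and orthogonal to both trivial motions, so
  \<open>|E'| + |V'| + 2 \<le> 3|V'|\<close>, which is \<open>(2,2)\<close>-sparsity.

  A symmetry \<open>g\<close> permutes the rows, and the operator \<open>u \<mapsto> \<tau>(g) u(\<phi>(g) _)\<close> on the columns
  restricts to the row space and to the kernel. Its trace is therefore the number of fixed rows plus
  its trace on the kernel, i.e.
  \<open>#fixed edges + #fixed vertices = #fixed vertices * tr \<tau>(g) - \<epsilon>z - \<epsilon>r\<close>,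
  where \<open>\<epsilon>z, \<epsilon>r = \<plusminus>1\<close> describe how \<open>\<tau>(g)\<close> acts on the two trivial motions. Evaluating this
  identity for each symmetry operation gives the claimed counts.\<close>

section \<open>Real functions on a finite set\<close>

definition inner_on :: "'x set \<Rightarrow> ('x \<Rightarrow> real) \<Rightarrow> ('x \<Rightarrow> real) \<Rightarrow> real" where
  "inner_on W u v = (\<Sum>x\<in>W. u x * v x)"

definition lin_indep_on :: "'x set \<Rightarrow> 'i set \<Rightarrow> ('i \<Rightarrow> 'x \<Rightarrow> real) \<Rightarrow> bool" where
  "lin_indep_on W I f \<longleftrightarrow> (\<forall>c. (\<forall>x\<in>W. (\<Sum>i\<in>I. c i * f i x) = 0) \<longrightarrow> (\<forall>i\<in>I. c i = 0))"

definition in_span_on :: "'x set \<Rightarrow> 'i set \<Rightarrow> ('i \<Rightarrow> 'x \<Rightarrow> real) \<Rightarrow> ('x \<Rightarrow> real) \<Rightarrow> bool" where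
  "in_span_on W I f u \<longleftrightarrow> (\<exists>c. \<forall>x\<in>W. u x = (\<Sum>i\<in>I. c i * f i x))"

lemma inner_on_commute: "inner_on W u v = inner_on W v u"
  unfolding inner_on_def by (simp add: mult.commute)

lemma inner_on_cong: "(\<And>x. x \<in> W \<Longrightarrow> v x = v' x) \<Longrightarrow> inner_on W u v = inner_on W u v'"
  unfolding inner_on_def by (rule sum.cong) auto

lemma inner_on_diff_right: "inner_on W u (\<lambda>x. v x - w x) = inner_on W u v - inner_on W u w"
  unfolding inner_on_def by (simp add: right_diff_distrib sum_subtractf)

lemma inner_on_add_right: "inner_on W u (\<lambda>x. v x + w x) = inner_on W u v + inner_on W u w"
  unfolding inner_on_def by (simp add: distrib_left sum.distrib)

lemma inner_on_mult_right: "inner_on W u (\<lambda>x. c * v x) = c * inner_on W u v"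
  unfolding inner_on_def by (simp add: sum_distrib_left mult.left_commute)

lemma inner_on_sum_right:
  "inner_on W u (\<lambda>x. \<Sum>l\<in>L. c l * g l x) = (\<Sum>l\<in>L. c l * inner_on W u (g l))"
  unfolding inner_on_def sum_distrib_left by (subst sum.swap) (simp add: mult.left_commute)

lemma inner_on_indicator_right:
  "finite W \<Longrightarrow> y \<in> W \<Longrightarrow> inner_on W u (\<lambda>z. if y = z then 1 else 0) = u y"
  unfolding inner_on_def by (simp add: if_distrib cong: if_cong)

lemma inner_on_self_nonneg: "inner_on W u u \<ge> 0"
  unfolding inner_on_def by (rule sum_nonneg) simp

lemma inner_on_self_pos:
  assumes "finite W" "x \<in> W" "u x \<noteq> 0"
  shows "inner_on W u u > 0"
proof -
  have "u x * u x \<le> inner_on W u u"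
    unfolding inner_on_def by (rule member_le_sum) (use assms in auto)
  moreover have "u x * u x > 0" using assms(3) not_real_square_gt_zero by blast
  ultimately show ?thesis by linarith
qed

lemma lin_indep_on_subset:
  assumes "lin_indep_on W I f" "J \<subseteq> I" "finite I"
  shows "lin_indep_on W J f"
  unfolding lin_indep_on_def
proof (intro allI impI)
  fix c assume comb: "\<forall>x\<in>W. (\<Sum>i\<in>J. c i * f i x) = 0"
  define c' where "c' i = (if i \<in> J then c i else 0)" for i
  have "(\<Sum>i\<in>I. c' i * f i x) = (\<Sum>i\<in>J. c i * f i x)" for x
    unfolding c'_def using assms(2,3) by (subst sum.mono_neutral_right[of I J]) auto
  then have "\<forall>i\<in>I. c' i = 0" using assms(1) comb unfolding lin_indep_on_def by simp
  then show "\<forall>i\<in>J. c i = 0" using assms(2) unfolding c'_def by (metis subsetD)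
qed

lemma lin_indep_on_insert_not_in_span:
  assumes "lin_indep_on W (insert a I) f" "a \<notin> I" "finite I"
  shows "\<not> in_span_on W I f (f a)"
proof
  assume "in_span_on W I f (f a)"
  then obtain c where c: "\<forall>x\<in>W. f a x = (\<Sum>i\<in>I. c i * f i x)" unfolding in_span_on_def by blast
  define c' where "c' i = (if i = a then - 1 else c i)" for i
  have "\<forall>x\<in>W. (\<Sum>i\<in>insert a I. c' i * f i x) = 0"
  proof
    fix x assume "x \<in> W"
    have "(\<Sum>i\<in>I. c' i * f i x) = (\<Sum>i\<in>I. c i * f i x)"
      using assms(2) unfolding c'_def by (intro sum.cong) auto
    then show "(\<Sum>i\<in>insert a I. c' i * f i x) = 0"
      using assms(2,3) c \<open>x \<in> W\<close> by (simp add: c'_def)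
  qed
  then have "c' a = 0" using assms(1) unfolding lin_indep_on_def by blast
  then show False unfolding c'_def by simp
qed

lemma in_span_on_member: "finite I \<Longrightarrow> i \<in> I \<Longrightarrow> in_span_on W I f (f i)"
  unfolding in_span_on_def
  by (rule exI[of _ "\<lambda>j. if j = i then 1 else 0"]) (simp add: if_distrib[of "\<lambda>c. c * _"] cong: if_cong)

lemma in_span_on_mono:
  assumes "in_span_on W J f u" "J \<subseteq> I" "finite I"
  shows "in_span_on W I f u"
proof -
  obtain c where c: "\<forall>x\<in>W. u x = (\<Sum>i\<in>J. c i * f i x)" using assms(1) unfolding in_span_on_def by blast
  have "(\<Sum>i\<in>J. c i * f i x) = (\<Sum>i\<in>I. (if i \<in> J then c i else 0) * f i x)" for x
    using assms(2,3) by (subst sum.mono_neutral_right[of I J]) auto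
  then show ?thesis unfolding in_span_on_def using c by metis
qed

lemma in_span_on_lincomb:
  assumes "in_span_on W I f u" "in_span_on W I f v"
  shows "in_span_on W I f (\<lambda>x. a * u x + b * v x)"
proof -
  obtain c d where "\<forall>x\<in>W. u x = (\<Sum>i\<in>I. c i * f i x)" "\<forall>x\<in>W. v x = (\<Sum>i\<in>I. d i * f i x)"
    using assms unfolding in_span_on_def by blast
  then have "\<forall>x\<in>W. a * u x + b * v x = (\<Sum>i\<in>I. (a * c i + b * d i) * f i x)"
    by (simp add: sum_distrib_left sum.distrib algebra_simps)
  then show ?thesis unfolding in_span_on_def by (rule exI[of _ "\<lambda>i. a * c i + b * d i"])
qed

lemma in_span_on_sum:
  assumes "finite L" "\<forall>l\<in>L. in_span_on W I f (g l)"
  shows "in_span_on W I f (\<lambda>x. \<Sum>l\<in>L. c l * g l x)"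
  using assms
proof (induction L rule: finite_induct)
  case empty
  then show ?case unfolding in_span_on_def by (intro exI[of _ "\<lambda>_. 0"]) simp
next
  case (insert l L)
  then show ?case using in_span_on_lincomb[of W I f "g l" "\<lambda>x. \<Sum>l\<in>L. c l * g l x" "c l" 1] by simp
qed

lemma inner_on_span_orth:
  assumes "in_span_on W I f u" "\<forall>i\<in>I. inner_on W (f i) d = 0"
  shows "inner_on W u d = 0"
proof -
  obtain c where "\<forall>x\<in>W. u x = (\<Sum>i\<in>I. c i * f i x)" using assms(1) unfolding in_span_on_def by blast
  then have "inner_on W d u = inner_on W d (\<lambda>x. \<Sum>i\<in>I. c i * f i x)"
    by (intro inner_on_cong) auto
  also have "\<dots> = 0" using assms(2) by (simp add: inner_on_sum_right inner_on_commute)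
  finally show ?thesis by (simp add: inner_on_commute)
qed

definition dual_family ::
    "'x set \<Rightarrow> 'i set \<Rightarrow> ('i \<Rightarrow> 'x \<Rightarrow> real) \<Rightarrow> ('i \<Rightarrow> 'x \<Rightarrow> real) \<Rightarrow> bool" where
  "dual_family W I f k \<longleftrightarrow>
     (\<forall>i\<in>I. \<forall>j\<in>I. inner_on W (f i) (k j) = (if i = j then 1 else 0)) \<and>
     (\<forall>j\<in>I. in_span_on W I f (k j))"

lemma dual_family_insert:
  assumes dual: "dual_family W R f k" and R: "finite R" "a \<notin> R"
    and s_orth: "\<forall>j\<in>R. inner_on W (f j) s = 0" and s_span: "in_span_on W (insert a R) f s"
    and nonzero: "inner_on W (f a) s \<noteq> 0"
  shows "dual_family W (insert a R) f (\<lambda>j x. if j = a then inverse (inner_on W (f a) s) * s x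
      else k j x - inner_on W (f a) (k j) * (inverse (inner_on W (f a) s) * s x))"
    (is "dual_family W _ f ?k")
proof -
  define c where "c = inverse (inner_on W (f a) s)"
  have c: "c * inner_on W (f a) s = 1" unfolding c_def using nonzero by simp
  have k_dual: "\<And>i j. i \<in> R \<Longrightarrow> j \<in> R \<Longrightarrow> inner_on W (f i) (k j) = (if i = j then 1 else 0)"
    and k_span: "\<And>j. j \<in> R \<Longrightarrow> in_span_on W (insert a R) f (k j)"
    using dual R(1) in_span_on_mono[of W R f _ "insert a R"] unfolding dual_family_def by auto
  have "inner_on W (f i) (?k j) = (if i = j then 1 else 0)" if "i \<in> insert a R" "j \<in> insert a R" for i j
  proof (cases "j = a")
    case True
    then show ?thesis using that s_orth c R(2) by (auto simp: inner_on_mult_right c_def)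
  next
    case False
    then have "inner_on W (f i) (?k j) = inner_on W (f i) (k j) - inner_on W (f a) (k j) * (c * inner_on W (f i) s)"
      by (simp add: inner_on_diff_right inner_on_mult_right c_def)
    then show ?thesis using that False s_orth k_dual c R(2) by auto
  qed
  moreover have "in_span_on W (insert a R) f (?k j)" if "j \<in> insert a R" for j
  proof (cases "j = a")
    case True
    then show ?thesis using in_span_on_lincomb[OF s_span s_span, of c 0] by (simp add: c_def)
  next
    case False
    then show ?thesis
      using in_span_on_lincomb[OF k_span s_span, of j 1 "- inner_on W (f a) (k j) * c"] that
      by (simp add: algebra_simps c_def)
  qed
  ultimately show ?thesis unfolding dual_family_def by blast
qed

text \<open>Gram--Schmidt: the new member, orthogonalised against the old ones, is not zero by
  independence.\<close>

lemma dual_family_exists: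
  assumes "finite I" "finite W" "lin_indep_on W I f"
  shows "\<exists>k. dual_family W I f k"
  using assms(1,3)
proof (induction I rule: finite_induct)
  case empty
  then show ?case unfolding dual_family_def by simp
next
  case (insert a R)
  have "lin_indep_on W R f" using lin_indep_on_subset[OF insert.prems] insert.hyps(1) by blast
  then obtain k where dual: "dual_family W R f k" using insert.IH by blast
  define proj where "proj = (\<lambda>x. \<Sum>l\<in>R. inner_on W (f a) (f l) * k l x)"
  define s where "s = (\<lambda>x. f a x - proj x)"
  have s_orth: "\<forall>j\<in>R. inner_on W (f j) s = 0"
  proof
    fix j assume "j \<in> R"
    then have "inner_on W (f j) proj = (\<Sum>l\<in>R. inner_on W (f a) (f l) * (if j = l then 1 else 0))"
      using dual unfolding proj_def inner_on_sum_right dual_family_def by simp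
    also have "\<dots> = inner_on W (f j) (f a)"
      using \<open>j \<in> R\<close> insert.hyps(1) by (simp add: if_distrib[of "\<lambda>c. _ * c"] inner_on_commute cong: if_cong)
    finally show "inner_on W (f j) s = 0" by (simp add: s_def inner_on_diff_right)
  qed
  have proj_span: "in_span_on W R f proj"
    unfolding proj_def by (rule in_span_on_sum[OF insert.hyps(1)]) (use dual in \<open>unfold dual_family_def, blast\<close>)
  then have "in_span_on W (insert a R) f (\<lambda>x. 1 * f a x + (- 1) * proj x)"
    by (intro in_span_on_lincomb in_span_on_member in_span_on_mono[OF proj_span]) (use insert.hyps in auto)
  then have s_span: "in_span_on W (insert a R) f s" by (simp add: s_def)
  have "\<exists>x\<in>W. s x \<noteq> 0"
  proof (rule ccontr)
    assume "\<not> (\<exists>x\<in>W. s x \<noteq> 0)"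
    then have "in_span_on W R f (f a)"
      using proj_span unfolding in_span_on_def s_def by simp
    then show False using lin_indep_on_insert_not_in_span[OF insert.prems insert.hyps(2,1)] by blast
  qed
  then have "inner_on W s s > 0" using inner_on_self_pos[OF assms(2)] by blast
  moreover have "inner_on W s (f a) = inner_on W s s + inner_on W s proj"
    unfolding inner_on_add_right[symmetric] by (simp add: s_def)
  moreover have "inner_on W s proj = 0"
    using inner_on_span_orth[OF proj_span s_orth] by (simp add: inner_on_commute)
  ultimately have "inner_on W (f a) s \<noteq> 0" by (simp add: inner_on_commute)
  then show ?case using dual_family_insert[OF dual insert.hyps(1,2) s_orth s_span] by blast
qed

lemma dual_family_residual_orth:
  assumes "finite W" "finite I" "dual_family W I f k" "y \<in> W" "j \<in> I"
  shows "inner_on W (f j) (\<lambda>z. (if y = z then 1 else 0) - (\<Sum>i\<in>I. f i y * k i z)) = 0"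
proof -
  have "inner_on W (f j) (\<lambda>z. \<Sum>i\<in>I. f i y * k i z) = (\<Sum>i\<in>I. f i y * (if j = i then 1 else 0))"
    using assms(3,5) unfolding inner_on_sum_right dual_family_def by (intro sum.cong) auto
  also have "\<dots> = f j y" using assms(2,5) by (simp add: if_distrib[of "\<lambda>c. _ * c"] cong: if_cong)
  finally show ?thesis by (simp add: inner_on_diff_right inner_on_indicator_right assms)
qed

lemma lin_indep_on_card_le:
  assumes "finite I" "finite W" "lin_indep_on W I f"
  shows "card I \<le> card W"
proof -
  obtain k where dual: "dual_family W I f k" using dual_family_exists[OF assms] by blast
  \<comment> \<open>\<open>h\<close> is the matrix of the orthogonal projection onto the span of \<open>f\<close>: its diagonal entries
    are at most \<open>1\<close> and its trace is \<open>card I\<close>.\<close>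
  define h where "h y z = (\<Sum>i\<in>I. f i y * k i z)" for y z
  have "h y y \<le> 1" if y: "y \<in> W" for y
  proof -
    define d where "d = (\<lambda>z. (if y = z then 1 else 0) - h y z)"
    have "inner_on W (k i) d = 0" if "i \<in> I" for i
      using inner_on_span_orth dual_family_residual_orth[OF assms(2,1) dual y] dual that
      unfolding d_def h_def dual_family_def by blast
    then have "inner_on W d (h y) = 0"
      unfolding h_def by (simp add: inner_on_sum_right inner_on_commute)
    then have "inner_on W d d = d y"
      by (subst (2) d_def) (simp add: inner_on_diff_right inner_on_indicator_right assms(2) y)
    then show ?thesis using inner_on_self_nonneg[of W d] unfolding d_def by simp
  qed
  then have "(\<Sum>y\<in>W. h y y) \<le> real (card W)" using sum_mono[of W "\<lambda>y. h y y" "\<lambda>_. 1"] by simp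
  moreover have "(\<Sum>y\<in>W. h y y) = real (card I)"
  proof -
    have "(\<Sum>y\<in>W. h y y) = (\<Sum>i\<in>I. inner_on W (f i) (k i))"
      unfolding h_def inner_on_def by (rule sum.swap)
    also have "\<dots> = (\<Sum>i\<in>I. 1)" using dual unfolding dual_family_def by (intro sum.cong) auto
    finally show ?thesis by simp
  qed
  ultimately show ?thesis by simp
qed

definition orth_pair_to ::
    "'x set \<Rightarrow> 'i set \<Rightarrow> ('i \<Rightarrow> 'x \<Rightarrow> real) \<Rightarrow> ('x \<Rightarrow> real) \<Rightarrow> ('x \<Rightarrow> real) \<Rightarrow> bool" where
  "orth_pair_to W I f t1 t2 \<longleftrightarrow>
     (\<forall>i\<in>I. inner_on W (f i) t1 = 0 \<and> inner_on W (f i) t2 = 0) \<and>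
     inner_on W t1 t2 = 0 \<and> inner_on W t1 t1 > 0 \<and> inner_on W t2 t2 > 0"

lemma lin_indep_on_orth_pair_card_le:
  assumes fin: "finite I" "finite W" and indep: "lin_indep_on W I f"
    and orth: "orth_pair_to W I f t1 t2"
  shows "card I + 2 \<le> card W"
proof -
  define g where "g j = (case j of Inl i \<Rightarrow> f i | Inr b \<Rightarrow> if b then t1 else t2)" for j
  have "lin_indep_on W (I <+> UNIV) g"
    unfolding lin_indep_on_def
  proof (intro allI impI)
    fix c assume comb: "\<forall>x\<in>W. (\<Sum>j\<in>I <+> UNIV. c j * g j x) = 0"
    define F where "F x = (\<Sum>i\<in>I. c (Inl i) * f i x) + c (Inr True) * t1 x + c (Inr False) * t2 x"
      for x
    have F0: "inner_on W t F = 0" for t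
    proof -
      have "\<forall>x\<in>W. F x = 0"
        using comb fin(1) unfolding F_def by (simp add: sum.Plus UNIV_bool g_def ac_simps)
      then show ?thesis unfolding inner_on_def by simp
    qed
    have inner_F: "inner_on W t F = c (Inr True) * inner_on W t t1 + c (Inr False) * inner_on W t t2"
      if "\<forall>i\<in>I. inner_on W (f i) t = 0" for t
      using that unfolding F_def[abs_def]
      by (simp add: inner_on_add_right inner_on_mult_right inner_on_sum_right inner_on_commute)
    have "c (Inr True) = 0" "c (Inr False) = 0"
      using inner_F[of t1] inner_F[of t2] F0[of t1] F0[of t2] orth
      unfolding orth_pair_to_def by (auto simp: inner_on_commute)
    then have "\<forall>x\<in>W. (\<Sum>i\<in>I. c (Inl i) * f i x) = 0"
      using comb fin(1) by (simp add: sum.Plus UNIV_bool g_def)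
    then have "\<forall>i\<in>I. c (Inl i) = 0"
      using indep[unfolded lin_indep_on_def, rule_format, of "\<lambda>i. c (Inl i)"] by blast
    with \<open>c (Inr True) = 0\<close> \<open>c (Inr False) = 0\<close> show "\<forall>j\<in>I <+> UNIV. c j = 0"
      by (auto simp: UNIV_bool)
  qed
  then have "card (I <+> (UNIV :: bool set)) \<le> card W"
    by (rule lin_indep_on_card_le[OF finite_Plus[OF fin(1) finite_class.finite_UNIV] fin(2)])
  then show ?thesis using fin(1) by (simp add: card_Plus)
qed

lemma dual_family_kernel_projection:
  assumes fin: "finite W" "finite I" and dual: "dual_family W I f k"
    and orth: "orth_pair_to W I f t1 t2"
    and kernel: "\<And>u. \<forall>i\<in>I. inner_on W (f i) u = 0 \<Longrightarrow> \<exists>a b. \<forall>x\<in>W. u x = a * t1 x + b * t2 x"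
    and y: "y \<in> W" and z: "z \<in> W"
  shows "(\<Sum>i\<in>I. f i y * k i z) = (if y = z then 1 else 0)
      - t1 y * t1 z / inner_on W t1 t1 - t2 y * t2 z / inner_on W t2 t2"
proof -
  define u where "u = (\<lambda>z. (if y = z then 1 else 0) - (\<Sum>i\<in>I. f i y * k i z))"
  obtain a b where ab: "\<forall>x\<in>W. u x = a * t1 x + b * t2 x"
    using kernel dual_family_residual_orth[OF fin(1,2) dual y] unfolding u_def by blast
  have u_t: "inner_on W u t = t y" if t_orth: "\<forall>i\<in>I. inner_on W (f i) t = 0" for t
  proof -
    have "\<forall>i\<in>I. inner_on W (k i) t = 0"
      using inner_on_span_orth[OF _ t_orth] dual unfolding dual_family_def by blast
    then have "\<forall>i\<in>I. inner_on W t (k i) = 0" by (simp add: inner_on_commute)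
    then show ?thesis unfolding u_def using fin y
      by (simp add: inner_on_commute[of W _ t] inner_on_diff_right inner_on_indicator_right
          inner_on_sum_right)
  qed
  have u_lin: "inner_on W u t = a * inner_on W t1 t + b * inner_on W t2 t" for t
  proof -
    have "inner_on W t u = inner_on W t (\<lambda>x. a * t1 x + b * t2 x)"
      using ab by (intro inner_on_cong) auto
    then show ?thesis by (simp add: inner_on_add_right inner_on_mult_right inner_on_commute)
  qed
  have "a = t1 y / inner_on W t1 t1" "b = t2 y / inner_on W t2 t2"
    using u_t[of t1] u_lin[of t1] u_t[of t2] u_lin[of t2] orth
    unfolding orth_pair_to_def by (auto simp: inner_on_commute field_simps)
  then have "u z = t1 y * t1 z / inner_on W t1 t1 + t2 y * t2 z / inner_on W t2 t2"
    using ab z by simp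
  then show ?thesis unfolding u_def by linarith
qed

text \<open>The trace of \<open>P\<close> is computed separately on the span of \<open>f\<close>, which the transpose of \<open>P\<close>
  permutes, and on its orthogonal complement, spanned by the eigenvectors \<open>t1, t2\<close>.\<close>

lemma card_fixed_eq_trace:
  assumes fin: "finite I" "finite W" and indep: "lin_indep_on W I f"
    and \<sigma>: "\<sigma> ` I \<subseteq> I"
    and transpose_perm: "\<And>i z. i \<in> I \<Longrightarrow> z \<in> W \<Longrightarrow> (\<Sum>y\<in>W. f i y * P y z) = f (\<sigma> i) z"
    and orth: "orth_pair_to W I f t1 t2"
    and kernel: "\<And>u. \<forall>i\<in>I. inner_on W (f i) u = 0 \<Longrightarrow> \<exists>a b. \<forall>x\<in>W. u x = a * t1 x + b * t2 x"
    and eigen1: "\<And>y. y \<in> W \<Longrightarrow> (\<Sum>z\<in>W. P y z * t1 z) = \<epsilon>1 * t1 y"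
    and eigen2: "\<And>y. y \<in> W \<Longrightarrow> (\<Sum>z\<in>W. P y z * t2 z) = \<epsilon>2 * t2 y"
  shows "real (card {i\<in>I. \<sigma> i = i}) = (\<Sum>y\<in>W. P y y) - \<epsilon>1 - \<epsilon>2"
proof -
  obtain k where dual: "dual_family W I f k" using dual_family_exists[OF fin indep] by blast
  define N1 where "N1 = inner_on W t1 t1"
  define N2 where "N2 = inner_on W t2 t2"
  have N: "N1 > 0" "N2 > 0" using orth unfolding orth_pair_to_def N1_def N2_def by auto
  have "real (card {i\<in>I. \<sigma> i = i}) = (\<Sum>i\<in>I. inner_on W (f (\<sigma> i)) (k i))"
    using fin(1) \<sigma> dual unfolding dual_family_def
    by (simp add: sum.If_cases[of I "\<lambda>i. \<sigma> i = i" "\<lambda>_. 1" "\<lambda>_. 0", simplified] Int_def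
        image_subset_iff cong: sum.cong)
  also have "\<dots> = (\<Sum>i\<in>I. \<Sum>z\<in>W. \<Sum>y\<in>W. P y z * (f i y * k i z))"
    unfolding inner_on_def
    by (intro sum.cong refl) (simp add: transpose_perm[symmetric] sum_distrib_left sum_distrib_right mult_ac)
  also have "\<dots> = (\<Sum>y\<in>W. \<Sum>z\<in>W. \<Sum>i\<in>I. P y z * (f i y * k i z))"
    by (subst sum.swap, subst (2) sum.swap) (rule sum.swap)
  also have "\<dots> = (\<Sum>y\<in>W. \<Sum>z\<in>W. P y z * (\<Sum>i\<in>I. f i y * k i z))"
    by (simp add: sum_distrib_left)
  also have "\<dots> = (\<Sum>y\<in>W. \<Sum>z\<in>W. P y z * ((if y = z then 1 else 0) - t1 y * t1 z / N1 - t2 y * t2 z / N2))"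
    using dual_family_kernel_projection[OF fin(2,1) dual orth kernel]
    unfolding N1_def N2_def by (intro sum.cong) auto
  also have "\<dots> = (\<Sum>y\<in>W. P y y - t1 y / N1 * (\<Sum>z\<in>W. P y z * t1 z) - t2 y / N2 * (\<Sum>z\<in>W. P y z * t2 z))"
  proof (intro sum.cong refl)
    fix y assume "y \<in> W"
    have "P y z * ((if y = z then 1 else 0) - t1 y * t1 z / N1 - t2 y * t2 z / N2) =
        (if y = z then P y z else 0) - t1 y / N1 * (P y z * t1 z) - t2 y / N2 * (P y z * t2 z)" for z
      by (simp add: algebra_simps)
    then show "(\<Sum>z\<in>W. P y z * ((if y = z then 1 else 0) - t1 y * t1 z / N1 - t2 y * t2 z / N2)) =
        P y y - t1 y / N1 * (\<Sum>z\<in>W. P y z * t1 z) - t2 y / N2 * (\<Sum>z\<in>W. P y z * t2 z)"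
      using fin(2) \<open>y \<in> W\<close> by (simp add: sum_subtractf sum_distrib_left)
  qed
  also have "\<dots> = (\<Sum>y\<in>W. P y y) - \<epsilon>1 * N1 / N1 - \<epsilon>2 * N2 / N2"
    unfolding N1_def N2_def inner_on_def using eigen1 eigen2
    by (simp add: sum_subtractf sum_divide_distrib sum_distrib_left mult_ac cong: sum.cong)
  finally show ?thesis using N by simp
qed

section \<open>The rigidity matrix of a framework on the cylinder\<close>

definition horiz :: "real^3 \<Rightarrow> real^3" where
  "horiz x = vector [x $ 1, x $ 2, 0]"

definition zrot :: "real^3 \<Rightarrow> real^3" where
  "zrot x = vector [- (x $ 2), x $ 1, 0]"

text \<open>A vector-valued map on vertices is read as a vector indexed by vertex/coordinate pairs,
  i.e.\ by the columns of the rigidity matrix.\<close>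
definition flatten :: "('v \<Rightarrow> real^3) \<Rightarrow> 'v \<times> 3 \<Rightarrow> real" where
  "flatten X = (\<lambda>(w, c). X w $ c)"

definition rigidity_row :: "('v \<Rightarrow> real^3) \<Rightarrow> 'v set + 'v \<Rightarrow> 'v \<Rightarrow> real^3" where
  "rigidity_row p i = (case i of Inl e \<Rightarrow> edge_row p e | Inr v \<Rightarrow> vertex_row p v)"

lemma horiz_component [simp]: "horiz x $ 1 = x $ 1" "horiz x $ 2 = x $ 2" "horiz x $ 3 = 0"
  unfolding horiz_def by simp_all

lemma zrot_component [simp]: "zrot x $ 1 = - (x $ 2)" "zrot x $ 2 = x $ 1" "zrot x $ 3 = 0"
  unfolding zrot_def by simp_all

lemma e3_component [simp]: "e3 $ 1 = 0" "e3 $ 2 = 0" "e3 $ 3 = 1"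
  unfolding e3_def by simp_all

lemmas vec3_simps = vec_eq_iff forall_3 inner_vec_def sum_3

lemma zrot_diff: "zrot x - zrot y = zrot (x - y)"
  by (simp add: vec3_simps)

lemma inner_zrot_self: "x \<bullet> zrot x = 0"
  by (simp add: vec3_simps algebra_simps)

lemma inner_horiz_zrot: "horiz x \<bullet> zrot x = 0"
  by (simp add: vec3_simps algebra_simps)

lemma inner_horiz_e3: "horiz x \<bullet> e3 = 0"
  by (simp add: vec3_simps)

lemma inner_e3_zrot: "e3 \<bullet> zrot x = 0"
  by (simp add: vec3_simps)

lemma inner_e3_e3: "e3 \<bullet> e3 = 1"
  by (simp add: vec3_simps)

lemma inner_zrot_zrot: "zrot x \<bullet> zrot x = (x $ 1)\<^sup>2 + (x $ 2)\<^sup>2"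
  by (simp add: vec3_simps power2_eq_square)

lemma inner_on_flatten:
  "finite V \<Longrightarrow> inner_on (V \<times> UNIV) (flatten X) u = (\<Sum>w\<in>V. X w \<bullet> (\<chi> c. u (w, c)))"
  unfolding inner_on_def flatten_def inner_vec_def sum.cartesian_product by (rule sum.cong) auto

lemma inner_on_flatten_flatten:
  "finite V \<Longrightarrow> inner_on (V \<times> UNIV) (flatten X) (flatten Y) = (\<Sum>w\<in>V. X w \<bullet> Y w)"
  using inner_on_flatten[of V X "flatten Y"] unfolding flatten_def by simp

lemma edge_row_pair:
  "a \<noteq> b \<Longrightarrow> edge_row p {a, b} x = (if x = a then p a - p b else if x = b then p b - p a else 0)"
  unfolding edge_row_def by (auto simp: insert_Diff_if)

lemma edge_row_outside: "w \<notin> e \<Longrightarrow> edge_row p e w = 0"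
  unfolding edge_row_def by simp

lemma vertex_row_eq: "vertex_row p v w = (if w = v then horiz (p v) else 0)"
  unfolding vertex_row_def horiz_def by simp

lemma sum_edge_row_inner:
  assumes "finite V" "a \<in> V" "b \<in> V" "a \<noteq> b"
  shows "(\<Sum>w\<in>V. edge_row p {a, b} w \<bullet> X w) = (p a - p b) \<bullet> (X a - X b)"
proof -
  have "(\<Sum>w\<in>V. edge_row p {a, b} w \<bullet> X w) =
      (\<Sum>w\<in>V. (if w = a then (p a - p b) \<bullet> X a else 0) + (if w = b then (p b - p a) \<bullet> X b else 0))"
    using assms(4) by (intro sum.cong) (auto simp: edge_row_pair)
  also have "\<dots> = (p a - p b) \<bullet> (X a - X b)"
    using assms by (simp add: sum.distrib inner_diff_left inner_diff_right)
  finally show ?thesis .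
qed

lemma sum_vertex_row_inner:
  "finite V \<Longrightarrow> v \<in> V \<Longrightarrow> (\<Sum>w\<in>V. vertex_row p v w \<bullet> X w) = horiz (p v) \<bullet> X v"
  by (simp add: vertex_row_eq if_distrib[of "\<lambda>x. x \<bullet> _"] cong: if_cong)

locale independent_cyl_framework =
  fixes V :: "'v set" and E :: "'v set set" and p :: "'v \<Rightarrow> real^3"
  assumes cyl: "cyl_framework V E p" and indep: "independent_fw V E p"
begin

lemma finite_V: "finite V"
  using cyl unfolding cyl_framework_def simple_graph_def by simp

lemma edgeE:
  assumes "e \<in> E"
  obtains a b where "e = {a, b}" "a \<noteq> b" "a \<in> V" "b \<in> V"
  using cyl assms unfolding cyl_framework_def simple_graph_def by metis

lemma edges_subset: "e \<in> E \<Longrightarrow> e \<subseteq> V"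
  by (erule edgeE) simp

lemma finite_E: "finite E"
proof (rule finite_subset)
  show "E \<subseteq> Pow V" using edges_subset by blast
qed (simp add: finite_V)

lemma on_cylinder: "v \<in> V \<Longrightarrow> (p v $ 1)\<^sup>2 + (p v $ 2)\<^sup>2 = 1"
  using cyl unfolding cyl_framework_def on_cylinder_def by simp

definition vert_transl :: "'v \<times> 3 \<Rightarrow> real" where
  "vert_transl = flatten (\<lambda>w. e3)"

definition axial_rot :: "'v \<times> 3 \<Rightarrow> real" where
  "axial_rot = flatten (\<lambda>w. zrot (p w))"

text \<open>The rows of \<open>E0\<close> and \<open>V0\<close> vanish outside the columns of \<open>V0\<close>, so a dependency among their
  restrictions to these columns is a dependency among rows of \<open>R_Y(G, p)\<close>.\<close>

lemma subframework_rows_lin_indep: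
  assumes E0: "E0 \<subseteq> E" and V0: "V0 \<subseteq> V" and sub: "\<forall>e\<in>E0. e \<subseteq> V0"
  shows "lin_indep_on (V0 \<times> UNIV) (E0 <+> V0) (\<lambda>i. flatten (rigidity_row p i))"
  unfolding lin_indep_on_def
proof (intro allI impI)
  fix c assume comb: "\<forall>x\<in>V0 \<times> UNIV. (\<Sum>i\<in>E0 <+> V0. c i * flatten (rigidity_row p i) x) = 0"
  have fin: "finite E0" "finite V0"
    using finite_subset E0 V0 finite_E finite_V by blast+
  define ce where "ce e = (if e \<in> E0 then c (Inl e) else 0)" for e
  define dv where "dv v = (if v \<in> V0 then c (Inr v) else 0)" for v
  have combination: "(\<Sum>e\<in>E. ce e *\<^sub>R edge_row p e w) + (\<Sum>v\<in>V. dv v *\<^sub>R vertex_row p v w)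
      = (\<Sum>i\<in>E0 <+> V0. c i *\<^sub>R rigidity_row p i w)" for w
    using E0 V0 fin finite_E finite_V
    by (simp add: sum.Plus rigidity_row_def ce_def dv_def if_distrib[of "\<lambda>a. a *\<^sub>R _"]
        sum.If_cases Int_absorb1)
  have "(\<Sum>i\<in>E0 <+> V0. c i *\<^sub>R rigidity_row p i w) = 0" for w
  proof (cases "w \<in> V0")
    case True
    then show ?thesis using comb by (simp add: vec_eq_iff flatten_def)
  next
    case False
    then have "rigidity_row p i w = 0" if "i \<in> E0 <+> V0" for i
      using that sub False by (auto simp: rigidity_row_def vertex_row_eq intro!: edge_row_outside)
        blast
    then show ?thesis by simp
  qed
  then have "(\<forall>e\<in>E. ce e = 0) \<and> (\<forall>v\<in>V. dv v = 0)"
    using indep[unfolded independent_fw_def, rule_format, of ce dv] combination by simp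
  then show "\<forall>i\<in>E0 <+> V0. c i = 0"
    using E0 V0 unfolding ce_def dv_def by fastforce
qed

lemma subframework_orth_pair:
  assumes E0: "E0 \<subseteq> E" and V0: "V0 \<subseteq> V" "V0 \<noteq> {}" and sub: "\<forall>e\<in>E0. e \<subseteq> V0"
  shows "orth_pair_to (V0 \<times> UNIV) (E0 <+> V0) (\<lambda>i. flatten (rigidity_row p i)) vert_transl axial_rot"
proof -
  have fin: "finite V0" using V0 finite_V finite_subset by blast
  have "inner_on (V0 \<times> UNIV) (flatten (rigidity_row p i)) vert_transl = 0 \<and>
      inner_on (V0 \<times> UNIV) (flatten (rigidity_row p i)) axial_rot = 0" if "i \<in> E0 <+> V0" for i
  proof (cases i)
    case (Inl e)
    then have "e \<in> E0" using that by auto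
    then obtain a b where "e = {a, b}" "a \<noteq> b" "a \<in> V0" "b \<in> V0"
      using E0 sub by (metis edgeE insert_subset subsetD)
    then show ?thesis unfolding Inl rigidity_row_def vert_transl_def axial_rot_def
      using fin by (simp add: inner_on_flatten_flatten sum_edge_row_inner zrot_diff inner_zrot_self)
  next
    case (Inr v)
    then have "v \<in> V0" using that by auto
    then show ?thesis unfolding Inr rigidity_row_def vert_transl_def axial_rot_def
      using fin by (simp add: inner_on_flatten_flatten sum_vertex_row_inner inner_horiz_zrot
          inner_horiz_e3)
  qed
  moreover have "inner_on (V0 \<times> UNIV) axial_rot axial_rot = real (card V0)"
    using fin V0(1) on_cylinder
    by (simp add: axial_rot_def inner_on_flatten_flatten inner_zrot_zrot subset_iff)
  ultimately show ?thesis
    using fin V0(2) unfolding orth_pair_to_def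
    by (simp add: vert_transl_def axial_rot_def inner_on_flatten_flatten inner_e3_zrot
        inner_e3_e3 card_gt_0_iff)
qed

lemma sparse: "sparse22 V E"
  unfolding sparse22_def
proof (intro allI impI, elim conjE)
  fix V0 E0 assume V0: "V0 \<noteq> {}" "V0 \<subseteq> V" and E0: "E0 \<subseteq> E" and sub: "\<forall>e\<in>E0. e \<subseteq> V0"
  have fin: "finite V0" "finite E0" using V0 E0 finite_V finite_E finite_subset by blast+
  have "card (E0 <+> V0) + 2 \<le> card (V0 \<times> (UNIV :: 3 set))"
    using lin_indep_on_orth_pair_card_le[OF _ _ subframework_rows_lin_indep[OF E0 V0(2) sub]
        subframework_orth_pair[OF E0 V0(2,1) sub]] fin
    by (simp add: finite_Plus)
  then show "int (card E0) \<le> 2 * int (card V0) - 2"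
    using fin by (simp add: card_Plus card_cartesian_product)
qed

end

locale isostatic_cyl_framework = independent_cyl_framework V E p
  for V :: "'v set" and E :: "'v set set" and p :: "'v \<Rightarrow> real^3" +
  assumes rigid: "inf_rigid V E p" and nonempty: "V \<noteq> {}"
begin

lemma kernel_trivial:
  assumes "\<forall>i\<in>E <+> V. inner_on (V \<times> UNIV) (flatten (rigidity_row p i)) u = 0"
  shows "\<exists>a b. \<forall>y\<in>V \<times> UNIV. u y = a * vert_transl y + b * axial_rot y"
proof -
  define U where "U w = (\<chi> c. u (w, c))" for w
  have "inner_on (V \<times> UNIV) (flatten (edge_row p e)) u = 0" if "e \<in> E" for e
    using assms that by (force simp: rigidity_row_def)
  moreover have "inner_on (V \<times> UNIV) (flatten (vertex_row p v)) u = 0" if "v \<in> V" for v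
    using assms that by (force simp: rigidity_row_def)
  ultimately have "in_kernel V E p U"
    using finite_V unfolding in_kernel_def U_def by (simp add: inner_on_flatten)
  then obtain a b where ab: "\<forall>w\<in>V. U w = vector [0, 0, a] + b *\<^sub>R vector [- (p w $ 2), p w $ 1, 0]"
    using rigid unfolding inf_rigid_def trivial_motion_def by blast
  have "u (w, c) = a * vert_transl (w, c) + b * axial_rot (w, c)" if "w \<in> V" for w c
  proof -
    have "u (w, c) = (vector [0, 0, a] + b *\<^sub>R vector [- (p w $ 2), p w $ 1, 0] :: real^3) $ c"
      using ab that unfolding U_def by (metis vec_lambda_beta)
    then show ?thesis
      using exhaust_3[of c] by (auto simp: vert_transl_def axial_rot_def flatten_def)
  qed
  then show ?thesis by blast
qed

lemma orth_pair: "orth_pair_to (V \<times> UNIV) (E <+> V) (\<lambda>i. flatten (rigidity_row p i)) vert_transl axial_rot"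
  using subframework_orth_pair[OF order_refl order_refl nonempty] edges_subset by blast

lemma rows_lin_indep: "lin_indep_on (V \<times> UNIV) (E <+> V) (\<lambda>i. flatten (rigidity_row p i))"
  using subframework_rows_lin_indep[OF order_refl order_refl] edges_subset by blast

end

section \<open>Counting fixed rows under a symmetry\<close>

text \<open>For a symmetry \<open>p (F v) = M p v\<close> of the framework, \<open>\<epsilon>z\<close> and \<open>\<epsilon>r\<close> are the factors by which
  \<open>u \<mapsto> M u(F _)\<close> multiplies the vertical translation and the axial rotation.\<close>

definition cyl_symmetry :: "real^3^3 \<Rightarrow> real \<Rightarrow> real \<Rightarrow> bool" where
  "cyl_symmetry M \<epsilon>z \<epsilon>r \<longleftrightarrow> transpose M = M \<and> (\<forall>x. M *v horiz x = horiz (M *v x)) \<and>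
     M *v e3 = \<epsilon>z *\<^sub>R e3 \<and> (\<forall>x. M *v zrot (M *v x) = \<epsilon>r *\<^sub>R zrot x)"

lemma cyl_symmetry_id: "cyl_symmetry (mat 1) 1 1"
  unfolding cyl_symmetry_def by simp

context isostatic_cyl_framework
begin

context
  fixes F :: "'v \<Rightarrow> 'v" and M :: "real^3^3" and \<epsilon>z \<epsilon>r :: real
  assumes F_V: "\<forall>v\<in>V. F v \<in> V" and F_invol: "\<forall>v\<in>V. F (F v) = v"
    and F_edge: "\<forall>a\<in>V. \<forall>b\<in>V. {a, b} \<in> E \<longrightarrow> {F a, F b} \<in> E"
    and p_F: "\<forall>v\<in>V. p (F v) = M *v p v"
    and M: "cyl_symmetry M \<epsilon>z \<epsilon>r"
begin

definition row_perm :: "'v set + 'v \<Rightarrow> 'v set + 'v" where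
  "row_perm i = (case i of Inl e \<Rightarrow> Inl (F ` e) | Inr v \<Rightarrow> Inr (F v))"

text \<open>The matrix of \<open>u \<mapsto> M u(F _)\<close> on the columns of the rigidity matrix.\<close>
definition sym_matrix :: "'v \<times> 3 \<Rightarrow> 'v \<times> 3 \<Rightarrow> real" where
  "sym_matrix y z = (if fst z = F (fst y) then M $ snd y $ snd z else 0)"

lemma F_eq_iff: "w \<in> V \<Longrightarrow> w' \<in> V \<Longrightarrow> w' = F w \<longleftrightarrow> w = F w'"
  using F_invol by metis

lemma M_symmetric: "M $ i $ j = M $ j $ i"
proof -
  have "transpose M $ j $ i = M $ j $ i" using M unfolding cyl_symmetry_def by simp
  then show ?thesis by (simp add: transpose_def)
qed

lemma sym_matrix_flatten:
  assumes "w \<in> V"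
  shows "(\<Sum>z\<in>V \<times> UNIV. sym_matrix (w, c) z * flatten X z) = (M *v X (F w)) $ c"
proof -
  have "(\<Sum>z\<in>V \<times> UNIV. sym_matrix (w, c) z * flatten X z)
      = (\<Sum>w'\<in>V. if w' = F w then (\<Sum>c'\<in>UNIV. M $ c $ c' * X w' $ c') else 0)"
    unfolding sum.cartesian_product' sym_matrix_def flatten_def by (intro sum.cong) auto
  also have "\<dots> = (\<Sum>c'\<in>UNIV. M $ c $ c' * X (F w) $ c')"
    using F_V assms finite_V by simp
  finally show ?thesis by (simp add: matrix_vector_mult_def)
qed

lemma flatten_sym_matrix:
  assumes "w' \<in> V"
  shows "(\<Sum>y\<in>V \<times> UNIV. flatten X y * sym_matrix y (w', c')) = (M *v X (F w')) $ c'"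
proof -
  have "(\<Sum>y\<in>V \<times> UNIV. flatten X y * sym_matrix y (w', c'))
      = (\<Sum>w\<in>V. if w = F w' then (\<Sum>c\<in>UNIV. M $ c' $ c * X w $ c) else 0)"
    unfolding sum.cartesian_product' sym_matrix_def flatten_def
    using F_eq_iff[OF _ assms] M_symmetric by (intro sum.cong) (auto simp: mult.commute)
  also have "\<dots> = (\<Sum>c\<in>UNIV. M $ c' $ c * X (F w') $ c)"
    using F_V assms finite_V by simp
  finally show ?thesis by (simp add: matrix_vector_mult_def)
qed

lemma rigidity_row_perm:
  assumes i: "i \<in> E <+> V" and w: "w \<in> V"
  shows "M *v rigidity_row p i (F w) = rigidity_row p (row_perm i) w"
proof (cases i)
  case (Inl e)
  then have "e \<in> E" using i by auto
  then obtain a b where ab: "e = {a, b}" "a \<noteq> b" "a \<in> V" "b \<in> V" by (rule edgeE)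
  then have "F a \<noteq> F b" using F_invol by metis
  moreover have "F w = a \<longleftrightarrow> w = F a" "F w = b \<longleftrightarrow> w = F b"
    using F_eq_iff[OF _ w] ab by auto
  ultimately show ?thesis
    unfolding Inl ab rigidity_row_def row_perm_def using ab p_F
    by (auto simp: edge_row_pair matrix_vector_mult_diff_distrib)
next
  case (Inr v)
  then have "v \<in> V" using i by auto
  moreover have "F w = v \<longleftrightarrow> w = F v" using F_eq_iff[OF \<open>v \<in> V\<close> w] by auto
  ultimately show ?thesis
    unfolding Inr rigidity_row_def row_perm_def using M p_F
    by (auto simp: vertex_row_eq cyl_symmetry_def)
qed

lemma fixed_edges_iff: "e \<in> fixed_edges E F \<longleftrightarrow> e \<in> E \<and> F ` e = e"
proof (cases "e \<in> E")
  case True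
  then obtain a b where "e = {a, b}" using edgeE by blast
  then show ?thesis unfolding fixed_edges_def by (auto simp: doubleton_eq_iff)
qed (simp add: fixed_edges_def)

lemma fixed_rows: "{i\<in>E <+> V. row_perm i = i} = fixed_edges E F <+> fixed_vertices V F"
  unfolding Plus_def by (auto simp: row_perm_def fixed_edges_iff fixed_vertices_def)

lemma card_fixed_edges_vertices:
  "real (card (fixed_edges E F) + card (fixed_vertices V F)) =
     real (card (fixed_vertices V F)) * trace M - \<epsilon>z - \<epsilon>r"
proof -
  have "row_perm i \<in> E <+> V" if "i \<in> E <+> V" for i
  proof (cases i)
    case (Inl e)
    then have "e \<in> E" using that by auto
    then obtain a b where "e = {a, b}" "a \<in> V" "b \<in> V" by (rule edgeE)
    then show ?thesis using F_edge \<open>e \<in> E\<close> by (auto simp: Inl row_perm_def)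
  qed (use that F_V in \<open>auto simp: row_perm_def\<close>)
  then have row_perm_closed: "row_perm ` (E <+> V) \<subseteq> E <+> V" by blast
  have "real (card {i\<in>E <+> V. row_perm i = i}) =
      (\<Sum>y\<in>V \<times> UNIV. sym_matrix y y) - \<epsilon>z - \<epsilon>r"
  proof (rule card_fixed_eq_trace[where P = sym_matrix, OF _ _ rows_lin_indep row_perm_closed _ orth_pair kernel_trivial])
    show "(\<Sum>y\<in>V \<times> UNIV. flatten (rigidity_row p i) y * sym_matrix y z) =
        flatten (rigidity_row p (row_perm i)) z" if "i \<in> E <+> V" "z \<in> V \<times> UNIV" for i z
    proof -
      from that obtain w c where "i \<in> E <+> V" "z = (w, c)" "w \<in> V" by blast
      then show ?thesis
        using flatten_sym_matrix[of w] rigidity_row_perm by (simp add: flatten_def)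
    qed
    show "(\<Sum>z\<in>V \<times> UNIV. sym_matrix y z * vert_transl z) = \<epsilon>z * vert_transl y"
      if "y \<in> V \<times> UNIV" for y
      using that M sym_matrix_flatten by (auto simp: vert_transl_def flatten_def cyl_symmetry_def)
    show "(\<Sum>z\<in>V \<times> UNIV. sym_matrix y z * axial_rot z) = \<epsilon>r * axial_rot y"
      if "y \<in> V \<times> UNIV" for y
      using that M sym_matrix_flatten p_F by (auto simp: axial_rot_def flatten_def cyl_symmetry_def)
  qed (use finite_V finite_E in \<open>simp_all add: finite_Plus\<close>)
  moreover have "(\<Sum>y\<in>V \<times> UNIV. sym_matrix y y) = real (card (fixed_vertices V F)) * trace M"
  proof -
    have "(\<Sum>y\<in>V \<times> UNIV. sym_matrix y y) = (\<Sum>w\<in>V. if F w = w then trace M else 0)"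
      unfolding sum.cartesian_product' sym_matrix_def trace_def by (intro sum.cong) auto
    then show ?thesis using finite_V by (simp add: sum.If_cases fixed_vertices_def Int_def)
  qed
  moreover have "finite (fixed_edges E F)" "finite (fixed_vertices V F)"
    using finite_E finite_V unfolding fixed_edges_def fixed_vertices_def by auto
  ultimately show ?thesis by (simp add: fixed_rows card_Plus)
qed

end

theorem tight: "tight22 V E"
proof -
  have "e \<in> fixed_edges E id" if "e \<in> E" for e
    using that by (rule edgeE) (use that in \<open>auto simp: fixed_edges_def\<close>)
  then have "fixed_edges E id = E" by (auto simp: fixed_edges_def)
  moreover have "real (card (fixed_edges E id) + card (fixed_vertices V id)) =
      real (card (fixed_vertices V id)) * trace (mat 1 :: real^3^3) - 1 - 1"
    by (rule card_fixed_edges_vertices) (simp_all add: cyl_symmetry_id)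
  ultimately have "int (card E) = 2 * int (card V) - 2"
    by (simp add: fixed_vertices_def trace_I)
  then show ?thesis unfolding tight22_def using sparse by simp
qed

end

section \<open>The symmetry operations\<close>

lemma refl_mat_mult: "refl_mat n *v x = x - (2 * (n \<bullet> x)) *\<^sub>R n"
  by (simp add: vec3_simps refl_mat_def outer_def mat_def matrix_vector_mult_def algebra_simps)

lemma halfturn_mat_mult: "halfturn_mat a *v x = (2 * (a \<bullet> x)) *\<^sub>R a - x"
  by (simp add: vec3_simps halfturn_mat_def outer_def mat_def matrix_vector_mult_def algebra_simps)

lemma inversion_mult: "inversion *v x = - x"
  by (simp add: vec3_simps inversion_def mat_def matrix_vector_mult_def)

lemma horizontal_unit: "norm (n :: real^3) = 1 \<Longrightarrow> n $ 3 = 0 \<Longrightarrow> n $ 1 * n $ 1 + n $ 2 * n $ 2 = 1"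
  by (simp add: norm_eq_1 inner_vec_def sum_3)

lemma cyl_symmetry_refl_mat:
  assumes "norm n = 1" "n $ 3 = 0"
  shows "cyl_symmetry (refl_mat n) 1 (- 1)" "trace (refl_mat n) = 1"
proof -
  have n: "n $ 1 * n $ 1 + n $ 2 * n $ 2 = 1" using horizontal_unit[OF assms] .
  have "transpose (refl_mat n) = refl_mat n"
    by (simp add: vec3_simps refl_mat_def outer_def mat_def transpose_def)
  moreover have "refl_mat n *v horiz x = horiz (refl_mat n *v x)" for x
    using assms(2) by (simp add: refl_mat_mult vec3_simps algebra_simps)
  moreover have "refl_mat n *v e3 = 1 *\<^sub>R e3"
    using assms(2) by (simp add: refl_mat_mult vec3_simps)
  moreover have "refl_mat n *v zrot (refl_mat n *v x) = (- 1) *\<^sub>R zrot x" for x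
    using assms(2) by (simp add: refl_mat_mult vec3_simps) (use n in algebra)
  ultimately show "cyl_symmetry (refl_mat n) 1 (- 1)" unfolding cyl_symmetry_def by blast
  show "trace (refl_mat n) = 1"
    using n assms(2) by (simp add: trace_def sum_3 refl_mat_def outer_def mat_def)
qed

lemma cyl_symmetry_halfturn_mat:
  assumes "norm a = 1" "a $ 3 = 0"
  shows "cyl_symmetry (halfturn_mat a) (- 1) (- 1)" "trace (halfturn_mat a) = - 1"
proof -
  have a: "a $ 1 * a $ 1 + a $ 2 * a $ 2 = 1" using horizontal_unit[OF assms] .
  have "transpose (halfturn_mat a) = halfturn_mat a"
    by (simp add: vec3_simps halfturn_mat_def outer_def mat_def transpose_def)
  moreover have "halfturn_mat a *v horiz x = horiz (halfturn_mat a *v x)" for x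
    using assms(2) by (simp add: halfturn_mat_mult vec3_simps algebra_simps)
  moreover have "halfturn_mat a *v e3 = (- 1) *\<^sub>R e3"
    using assms(2) by (simp add: halfturn_mat_mult vec3_simps)
  moreover have "halfturn_mat a *v zrot (halfturn_mat a *v x) = (- 1) *\<^sub>R zrot x" for x
    using assms(2) by (simp add: halfturn_mat_mult vec3_simps) (use a in algebra)
  ultimately show "cyl_symmetry (halfturn_mat a) (- 1) (- 1)" unfolding cyl_symmetry_def by blast
  show "trace (halfturn_mat a) = - 1"
    using a assms(2) by (simp add: trace_def sum_3 halfturn_mat_def outer_def mat_def)
qed

lemma cyl_symmetry_sigma': "cyl_symmetry sigma' (- 1) 1" "trace sigma' = 1"
proof -
  have "transpose sigma' = sigma'"
    by (simp add: vec3_simps sigma'_def refl_mat_def outer_def mat_def transpose_def)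
  then show "cyl_symmetry sigma' (- 1) 1"
    unfolding cyl_symmetry_def by (simp add: sigma'_def refl_mat_mult vec3_simps)
  show "trace sigma' = 1"
    by (simp add: trace_def sum_3 sigma'_def refl_mat_def outer_def mat_def)
qed

lemma cyl_symmetry_inversion: "cyl_symmetry inversion (- 1) 1" "trace inversion = - 3"
proof -
  have "transpose inversion = inversion"
    by (simp add: vec3_simps inversion_def mat_def transpose_def)
  then show "cyl_symmetry inversion (- 1) 1"
    unfolding cyl_symmetry_def by (simp add: inversion_mult vec3_simps)
  show "trace inversion = - 3" by (simp add: inversion_def trace_def sum_3 mat_def)
qed

lemma refl_mat_halfturn_mat: "norm n = 1 \<Longrightarrow> refl_mat n *v (halfturn_mat n *v x) = - x"
  by (simp add: refl_mat_mult halfturn_mat_mult inner_diff_right norm_eq_1)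

lemma halfturn_mat_refl_mat:
  assumes "norm n = 1"
  shows "halfturn_mat n *v (refl_mat n *v x) = - x"
proof -
  have "n \<bullet> (refl_mat n *v x) = - (n \<bullet> x)"
    using assms by (simp add: refl_mat_mult inner_diff_right norm_eq_1)
  then show ?thesis by (simp add: halfturn_mat_mult refl_mat_mult)
qed


section \<open>Symmetric isostatic frameworks\<close>

locale symmetric_isostatic_framework = isostatic_cyl_framework V E p
  for V :: "'v set" and E :: "'v set set" and p :: "'v \<Rightarrow> real^3" +
  fixes \<Gamma> :: "('g, 'b) monoid_scheme" and \<phi> :: "'g \<Rightarrow> 'v \<Rightarrow> 'v" and \<tau> :: "'g \<Rightarrow> real^3^3"
  assumes group: "group \<Gamma>" and aut: "aut_hom \<Gamma> V E \<phi>" and orth: "orth_rep \<Gamma> \<tau>"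
    and symmetric: "symmetric_fw \<Gamma> V \<phi> \<tau> p"
begin

lemma tau_mult: "g \<in> carrier \<Gamma> \<Longrightarrow> h \<in> carrier \<Gamma> \<Longrightarrow> \<tau> (g \<otimes>\<^bsub>\<Gamma>\<^esub> h) = \<tau> g ** \<tau> h"
  using orth unfolding orth_rep_def by blast

lemma tau_orthogonal: "g \<in> carrier \<Gamma> \<Longrightarrow> transpose (\<tau> g) ** \<tau> g = mat 1"
  using orth unfolding orth_rep_def orthogonal_matrix_def by blast

lemma tau_eq_iff: "g \<in> carrier \<Gamma> \<Longrightarrow> h \<in> carrier \<Gamma> \<Longrightarrow> \<tau> g = \<tau> h \<longleftrightarrow> g = h"
  using orth unfolding orth_rep_def by (meson inj_on_eq_iff)

lemma phi_mult:
  "g \<in> carrier \<Gamma> \<Longrightarrow> h \<in> carrier \<Gamma> \<Longrightarrow> v \<in> V \<Longrightarrow> \<phi> (g \<otimes>\<^bsub>\<Gamma>\<^esub> h) v = \<phi> g (\<phi> h v)"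
  using aut unfolding aut_hom_def by blast

lemma phi_aut: "g \<in> carrier \<Gamma> \<Longrightarrow> graph_aut V E (\<phi> g)"
  using aut unfolding aut_hom_def by blast

lemma phi_V: "g \<in> carrier \<Gamma> \<Longrightarrow> v \<in> V \<Longrightarrow> \<phi> g v \<in> V"
  using phi_aut unfolding graph_aut_def by (meson bij_betw_apply)

lemma p_phi: "g \<in> carrier \<Gamma> \<Longrightarrow> v \<in> V \<Longrightarrow> p (\<phi> g v) = \<tau> g *v p v"
  using symmetric unfolding symmetric_fw_def by simp

lemma tau_one: "\<tau> \<one>\<^bsub>\<Gamma>\<^esub> = mat 1"
proof -
  let ?T = "\<tau> \<one>\<^bsub>\<Gamma>\<^esub>"
  have one: "\<one>\<^bsub>\<Gamma>\<^esub> \<in> carrier \<Gamma>" using group by (simp add: group.is_monoid)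
  then have "?T = ?T ** ?T"
    using tau_mult[OF one one] group by (simp add: group.is_monoid monoid.l_one[OF _ one])
  then have "transpose ?T ** ?T = (transpose ?T ** ?T) ** ?T" by (metis matrix_mul_assoc)
  then show ?thesis using tau_orthogonal[OF one] by simp
qed

lemma phi_one: "v \<in> V \<Longrightarrow> \<phi> \<one>\<^bsub>\<Gamma>\<^esub> v = v"
proof -
  assume v: "v \<in> V"
  have one: "\<one>\<^bsub>\<Gamma>\<^esub> \<in> carrier \<Gamma>" using group by (simp add: group.is_monoid)
  have "inj_on (\<phi> \<one>\<^bsub>\<Gamma>\<^esub>) V" using phi_aut[OF one] unfolding graph_aut_def bij_betw_def by blast
  moreover have "\<phi> \<one>\<^bsub>\<Gamma>\<^esub> (\<phi> \<one>\<^bsub>\<Gamma>\<^esub> v) = \<phi> \<one>\<^bsub>\<Gamma>\<^esub> v"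
    using phi_mult[OF one one v] group by (simp add: group.is_monoid monoid.l_one[OF _ one])
  ultimately show ?thesis using phi_V[OF one v] v by (meson inj_onD)
qed

text \<open>A symmetric orthogonal \<open>\<tau> g\<close> squares to the identity, so by faithfulness of \<open>\<tau>\<close>
  the element \<open>g\<close> is an involution.\<close>

lemma phi_involution:
  assumes g: "g \<in> carrier \<Gamma>" and "transpose (\<tau> g) = \<tau> g" and v: "v \<in> V"
  shows "\<phi> g (\<phi> g v) = v"
proof -
  have closed: "g \<otimes>\<^bsub>\<Gamma>\<^esub> g \<in> carrier \<Gamma>" "\<one>\<^bsub>\<Gamma>\<^esub> \<in> carrier \<Gamma>"
    using g group by (simp_all add: group.is_monoid monoid.m_closed)
  have "\<tau> (g \<otimes>\<^bsub>\<Gamma>\<^esub> g) = \<tau> \<one>\<^bsub>\<Gamma>\<^esub>"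
    using tau_mult[OF g g] tau_orthogonal[OF g] assms(2) tau_one by simp
  then have "g \<otimes>\<^bsub>\<Gamma>\<^esub> g = \<one>\<^bsub>\<Gamma>\<^esub>" using tau_eq_iff closed by blast
  then show ?thesis using phi_mult[OF g g v] phi_one[OF v] by simp
qed

lemma card_fixed_by:
  assumes g: "g \<in> carrier \<Gamma>" and M: "cyl_symmetry (\<tau> g) \<epsilon>z \<epsilon>r"
  shows "real (card (fixed_edges E (\<phi> g)) + card (fixed_vertices V (\<phi> g))) =
     real (card (fixed_vertices V (\<phi> g))) * trace (\<tau> g) - \<epsilon>z - \<epsilon>r"
proof (rule card_fixed_edges_vertices[OF _ _ _ _ M])
  show "\<forall>a\<in>V. \<forall>b\<in>V. {a, b} \<in> E \<longrightarrow> {\<phi> g a, \<phi> g b} \<in> E"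
    using phi_aut[OF g] unfolding graph_aut_def by blast
  show "\<forall>v\<in>V. \<phi> g (\<phi> g v) = v"
    using phi_involution[OF g] M unfolding cyl_symmetry_def by blast
qed (use g phi_V p_phi in auto)

lemma finite_fixed: "finite (fixed_edges E f)" "finite (fixed_vertices V f)"
  using finite_E finite_V unfolding fixed_edges_def fixed_vertices_def by auto

lemma fixed_edges_empty:
  assumes g: "g \<in> carrier \<Gamma>" and "cyl_symmetry (\<tau> g) \<epsilon>z \<epsilon>r"
    and "trace (\<tau> g) \<le> 1" and "\<epsilon>z + \<epsilon>r = 0"
  shows "fixed_edges E (\<phi> g) = {}"
proof -
  have "real (card (fixed_vertices V (\<phi> g))) * trace (\<tau> g) \<le> card (fixed_vertices V (\<phi> g))"
    using assms(3) by (simp add: mult_left_le)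
  then have "card (fixed_edges E (\<phi> g)) = 0" using card_fixed_by[OF assms(1,2)] assms(4) by linarith
  then show ?thesis using finite_fixed by simp
qed

lemma fixed_edges_empty_reflection:
  assumes "g \<in> carrier \<Gamma>" and "is_sigma (\<tau> g) \<or> \<tau> g = sigma' \<or> \<tau> g = inversion"
  shows "fixed_edges E (\<phi> g) = {}"
proof -
  consider n where "norm n = 1" "n $ 3 = 0" "\<tau> g = refl_mat n" | "\<tau> g = sigma'" | "\<tau> g = inversion"
    using assms(2) unfolding is_sigma_def by blast
  then show ?thesis
  proof cases
    case (1 n)
    then show ?thesis using fixed_edges_empty[OF assms(1)] cyl_symmetry_refl_mat[of n] by simp
  next
    case 2
    then show ?thesis using fixed_edges_empty[OF assms(1)] cyl_symmetry_sigma' by simp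
  next
    case 3
    then show ?thesis using fixed_edges_empty[OF assms(1)] cyl_symmetry_inversion by simp
  qed
qed

lemma fixed_by_c2':
  assumes g: "g \<in> carrier \<Gamma>" and "is_c2' (\<tau> g)"
  shows "(card (fixed_edges E (\<phi> g)) = 2 \<and> fixed_vertices V (\<phi> g) = {}) \<or>
         (fixed_edges E (\<phi> g) = {} \<and> card (fixed_vertices V (\<phi> g)) = 1)"
proof -
  obtain a where "norm a = 1" "a $ 3 = 0" "\<tau> g = halfturn_mat a"
    using assms(2) unfolding is_c2'_def by blast
  then have "card (fixed_edges E (\<phi> g)) + 2 * card (fixed_vertices V (\<phi> g)) = 2"
    using card_fixed_by[OF g, of "- 1" "- 1"] cyl_symmetry_halfturn_mat by simp
  then have "(card (fixed_edges E (\<phi> g)) = 2 \<and> card (fixed_vertices V (\<phi> g)) = 0) \<or>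
      (card (fixed_edges E (\<phi> g)) = 0 \<and> card (fixed_vertices V (\<phi> g)) = 1)"
    by (cases "card (fixed_vertices V (\<phi> g))") auto
  then show ?thesis using finite_fixed by auto
qed

text \<open>In \<open>C_2h\<close> the half-turn commutes with the reflection, so the reflection permutes the
  fixed vertices of the half-turn; a unique such vertex would be fixed by their product,
  the inversion, and hence sit at the origin, off the cylinder.\<close>

lemma halfturn_fixed_vertices_not_singleton:
  assumes g: "g \<in> carrier \<Gamma>" "\<tau> g = halfturn_mat n" and s: "s \<in> carrier \<Gamma>" "\<tau> s = refl_mat n"
    and n: "norm n = 1"
  shows "card (fixed_vertices V (\<phi> g)) \<noteq> 1"
proof
  assume "card (fixed_vertices V (\<phi> g)) = 1"
  then obtain w where fixed: "fixed_vertices V (\<phi> g) = {w}" by (rule card_1_singletonE)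
  then have w: "w \<in> V" "\<phi> g w = w" unfolding fixed_vertices_def by auto
  have "\<tau> (g \<otimes>\<^bsub>\<Gamma>\<^esub> s) = \<tau> (s \<otimes>\<^bsub>\<Gamma>\<^esub> g)"
    unfolding tau_mult[OF g(1) s(1)] tau_mult[OF s(1) g(1)] g(2) s(2)
    by (rule matrix_eq[THEN iffD2])
      (simp add: matrix_vector_mul_assoc[symmetric] refl_mat_halfturn_mat halfturn_mat_refl_mat n)
  then have "g \<otimes>\<^bsub>\<Gamma>\<^esub> s = s \<otimes>\<^bsub>\<Gamma>\<^esub> g"
    using tau_eq_iff g(1) s(1) group by (simp add: group.is_monoid monoid.m_closed)
  then have "\<phi> g (\<phi> s w) = \<phi> s w" using phi_mult g(1) s(1) w by metis
  then have "\<phi> s w = w" using fixed phi_V[OF s(1) w(1)] unfolding fixed_vertices_def by blast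
  then have "p w = refl_mat n *v (halfturn_mat n *v p w)"
    using p_phi[OF s(1) w(1)] p_phi[OF g(1) w(1)] g(2) s(2) w(2) by simp
  then have "(2 :: real) *\<^sub>R p w = 0"
    using refl_mat_halfturn_mat[OF n] by (simp add: scaleR_2 eq_neg_iff_add_eq_0)
  then have "p w = 0" by simp
  then show False using on_cylinder[OF w(1)] by simp
qed

lemma fixed_by_halfturn_in_C2h:
  assumes g: "g \<in> carrier \<Gamma>" "\<tau> g = halfturn_mat n" and "refl_mat n \<in> \<tau> ` carrier \<Gamma>"
    and n: "norm n = 1" "n $ 3 = 0"
  shows "card (fixed_edges E (\<phi> g)) = 2 \<and> fixed_vertices V (\<phi> g) = {}"
proof -
  obtain s where s: "s \<in> carrier \<Gamma>" "\<tau> s = refl_mat n" using assms(3) by (metis imageE)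
  have "is_c2' (\<tau> g)" using g(2) n unfolding is_c2'_def by blast
  then show ?thesis
    using fixed_by_c2'[OF g(1)] halfturn_fixed_vertices_not_singleton[OF g s n(1)] by argo
qed

end

theorem theorem3p8:
  fixes \<Gamma> :: "('g, 'b) monoid_scheme"
    and V :: "'v set" and E :: "'v set set"
    and \<phi> :: "'g \<Rightarrow> 'v \<Rightarrow> 'v" and \<tau> :: "'g \<Rightarrow> real^3^3"
    and p :: "'v \<Rightarrow> real^3"
  assumes "group \<Gamma>" and "finite (carrier \<Gamma>)"
    and "simple_graph V E" and "V \<noteq> {}"
    and "aut_hom \<Gamma> V E \<phi>"
    and "orth_rep \<Gamma> \<tau>"
    and "is_Ci (\<tau> ` carrier \<Gamma>) \<or> is_Cs (\<tau> ` carrier \<Gamma>) \<or> is_C2 (\<tau> ` carrier \<Gamma>)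
         \<or> is_C2v (\<tau> ` carrier \<Gamma>) \<or> is_C2h (\<tau> ` carrier \<Gamma>)"
    and "cyl_framework V E p"
    and "symmetric_fw \<Gamma> V \<phi> \<tau> p"
    and "isostatic V E p"
  shows "tight22 V E \<and>
    (is_Ci (\<tau> ` carrier \<Gamma>) \<longrightarrow>
       (\<forall>g\<in>carrier \<Gamma>. \<tau> g = inversion \<longrightarrow> fixed_edges E (\<phi> g) = {})) \<and>
    (\<forall>s. (is_sigma s \<or> s = sigma') \<and> \<tau> ` carrier \<Gamma> = {mat 1, s} \<longrightarrow>
       (\<forall>g\<in>carrier \<Gamma>. \<tau> g = s \<longrightarrow> fixed_edges E (\<phi> g) = {})) \<and>
    (\<forall>c. is_c2' c \<and> \<tau> ` carrier \<Gamma> = {mat 1, c} \<longrightarrow>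
       (\<forall>g\<in>carrier \<Gamma>. \<tau> g = c \<longrightarrow>
          (card (fixed_edges E (\<phi> g)) = 2 \<and> fixed_vertices V (\<phi> g) = {}) \<or>
          (fixed_edges E (\<phi> g) = {} \<and> card (fixed_vertices V (\<phi> g)) = 1))) \<and>
    (\<forall>s c. is_sigma s \<and> is_c2' c \<and> \<tau> ` carrier \<Gamma> = {mat 1, s, sigma', c} \<longrightarrow>
       (\<forall>g\<in>carrier \<Gamma>. (\<tau> g = s \<or> \<tau> g = sigma') \<longrightarrow> fixed_edges E (\<phi> g) = {}) \<and>
       (\<forall>g\<in>carrier \<Gamma>. \<tau> g = c \<longrightarrow>
          (card (fixed_edges E (\<phi> g)) = 2 \<and> fixed_vertices V (\<phi> g) = {}) \<or>
          (fixed_edges E (\<phi> g) = {} \<and> card (fixed_vertices V (\<phi> g)) = 1))) \<and>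
    (\<forall>n. norm n = 1 \<and> n $ 3 = 0 \<and>
        \<tau> ` carrier \<Gamma> = {mat 1, refl_mat n, halfturn_mat n, inversion} \<longrightarrow>
       (\<forall>g\<in>carrier \<Gamma>. (\<tau> g = refl_mat n \<or> \<tau> g = inversion) \<longrightarrow> fixed_edges E (\<phi> g) = {}) \<and>
       (\<forall>g\<in>carrier \<Gamma>. \<tau> g = halfturn_mat n \<longrightarrow>
          card (fixed_edges E (\<phi> g)) = 2 \<and> fixed_vertices V (\<phi> g) = {}))"
proof -
  interpret symmetric_isostatic_framework V E p \<Gamma> \<phi> \<tau>
    using assms unfolding symmetric_isostatic_framework_def isostatic_cyl_framework_def
      independent_cyl_framework_def isostatic_cyl_framework_axioms_def isostatic_def
      symmetric_isostatic_framework_axioms_def by blast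
  have sigma: "is_sigma (refl_mat n)" if "norm n = 1" "n $ 3 = 0" for n
    using that unfolding is_sigma_def by blast
  show ?thesis
  proof (intro conjI allI impI ballI)
    show "tight22 V E" by (rule tight)
  qed (auto simp: fixed_edges_empty_reflection sigma fixed_by_halfturn_in_C2h dest: fixed_by_c2')
qed

end
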